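(* Let $r\geq 2$ be a fixed integer, let $V$ be a set of $n$ vertices, and let $d=d(n)$ satisfy $d=o(n^{r-1})$. Suppose $H,H'\subseteq\binom{V}{r}$ are two edge-disjoint $r$-graphs on $V$ such that $|H|=o(nd)$ and $\Delta(H')=o(n^{r-1})$. Then, for all $e\in\binom{V}{r}\setminus(H\cup H')$, \[\mathbb{P}\left[e\in G_{n,d}^{(r)}\mid\mathcal{G}_{n,d,H,H'}^{(r)}\right]\leq(r-1)!\frac{d}{n^{r-1}}\left(1+O\left(\frac{1}{n}+\frac{d}{n^{r-1}}+\frac{|H|}{nd}+\frac{\Delta(H')}{n^{r-1}}\right)\right).\]
   Context: An $r$-graph on $V$ is a set of $r$-element subsets (edges) of $V$; $|H|$ is its number of edges, $\deg_H(v)$ the number of edges containing $v$, and $\Delta(H)$ the maximum degree. $\mathcal{G}_{n,d}^{(r)}$ is the set of all $d$-regular $r$-graphs on the $n$-vertex set $V$ (it is assumed throughout that $r\mid nd$), and $G_{n,d}^{(r)}$ is chosen uniformly at random from it. For $r$-graphs $H,H'$ on $V$, $\mathcal{G}_{n,d,H,H'}^{(r)}$ is the set of $G\in\mathcal{G}_{n,d}^{(r)}$ with $H\subseteq G$ and $H'\cap G=\varnothing$; it is also used to denote the event $G_{n,d}^{(r)}\in\mathcal{G}_{n,d,H,H'}^{(r)}$. Asymptotics are as $n\to\infty$; the implicit constant in $O(\cdot)$ depends only on $r$. *)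

theory Defs
  imports Complex_Main "HOL-Library.Landau_Symbols"
begin

definition r_subsets :: "nat set \<Rightarrow> nat \<Rightarrow> nat set set" where
  "r_subsets V r = {e. e \<subseteq> V \<and> card e = r}"

definition hdeg :: "nat set set \<Rightarrow> nat \<Rightarrow> nat" where
  "hdeg G v = card {e \<in> G. v \<in> e}"

definition maxdeg :: "nat \<Rightarrow> nat set set \<Rightarrow> nat" where
  "maxdeg n G = Max (insert 0 (hdeg G ` {0..<n}))"

definition regular_graphs :: "nat \<Rightarrow> nat \<Rightarrow> nat \<Rightarrow> nat set set set" where
  "regular_graphs r n d =
     {G. G \<subseteq> r_subsets {0..<n} r \<and> (\<forall>v\<in>{0..<n}. hdeg G v = d)}"

definition cond_graphs ::
  "nat \<Rightarrow> nat \<Rightarrow> nat \<Rightarrow> nat set set \<Rightarrow> nat set set \<Rightarrow> nat set set set" where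
  "cond_graphs r n d H H' = {G \<in> regular_graphs r n d. H \<subseteq> G \<and> H' \<inter> G = {}}"

text \<open>P[e in G | G_{n,d,H,H'}] for the uniform random d-regular r-graph
  (0 if the conditioning event is empty).\<close>
definition cond_prob ::
  "nat \<Rightarrow> nat \<Rightarrow> nat \<Rightarrow> nat set set \<Rightarrow> nat set set \<Rightarrow> nat set \<Rightarrow> real" where
  "cond_prob r n d H H' e =
     real (card {G \<in> cond_graphs r n d H H'. e \<in> G}) / real (card (cond_graphs r n d H H'))"

end

theory Submission
  imports Defs "HOL-Combinatorics.Multiset_Permutations"
begin

text \<open>
  A switching argument. Fix an ordering x of e. Given a graph G containing e, pick r - 1 further
  ordered edges Y 0, ..., Y (r - 2) of G - H; together with x they form the rows of an r x r
  array of vertices. The switch deletes the rows and inserts the r columns. If all entries are distinct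
  and no column is already in G or H', the result is again a d-regular graph in the conditioning
  event, now avoiding e: every vertex lies in as many deleted as inserted edges. Since G is
  recovered from the switched graph and the array, double counting the pairs (graph, array) gives
  |{G : e \<in> G}| \<cdot> ((r-1)! n d)^(r-1) (1 - O(\<dots>)) \<le> |{G : e \<notin> G}| \<cdot> ((r-1)! d)^r:
  forward, almost every choice of rows is admissible, and backward, column i is an edge of the
  new graph through x i, listed in one of (r-1)! orders.
\<close>

lemma card_enumerations:
  assumes "finite S" "card S = k" "S \<subseteq> V"
  shows "card {\<phi> \<in> {0..<k} \<rightarrow>\<^sub>E V. inj_on \<phi> {0..<k} \<and> \<phi> ` {0..<k} = S} = fact k"
proof -
  let ?P = "{\<phi> \<in> {0..<k} \<rightarrow>\<^sub>E V. inj_on \<phi> {0..<k} \<and> \<phi> ` {0..<k} = S}"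
  let ?f = "\<lambda>\<phi>. map \<phi> [0..<k]"
  have inj: "inj_on ?f ?P"
  proof (rule inj_onI)
    fix a b assume a: "a \<in> ?P" and b: "b \<in> ?P" and eq: "?f a = ?f b"
    show "a = b"
    proof (rule extensionalityI[of _ "{0..<k}"])
      show "a \<in> extensional {0..<k}" "b \<in> extensional {0..<k}" using a b by (auto simp: PiE_def)
      fix i assume "i \<in> {0..<k}"
      then show "a i = b i" using eq by (metis atLeastLessThan_iff map_eq_conv set_upt)
    qed
  qed
  have "?f ` ?P = permutations_of_set S"
  proof
    show "?f ` ?P \<subseteq> permutations_of_set S"
      by (auto simp: permutations_of_set_def distinct_map)
    show "permutations_of_set S \<subseteq> ?f ` ?P"
    proof
      fix xs assume "xs \<in> permutations_of_set S"
      then have xs: "set xs = S" "distinct xs" by (auto simp: permutations_of_set_def)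
      then have len: "length xs = k" using assms distinct_card by fastforce
      define \<phi> where "\<phi> = restrict (\<lambda>i. xs ! i) {0..<k}"
      have "?f \<phi> = xs" unfolding \<phi>_def using len by (simp add: map_nth list_eq_iff_nth_eq)
      moreover have "\<phi> \<in> ?P"
      proof -
        have "\<phi> ` {0..<k} = S" unfolding \<phi>_def using xs len by (auto simp: set_conv_nth)
        moreover have "inj_on \<phi> {0..<k}" unfolding \<phi>_def using xs len
          by (auto simp: inj_on_def nth_eq_iff_index_eq)
        moreover have "\<forall>i<k. xs ! i \<in> V" using xs len assms(3) nth_mem by blast
        then have "\<phi> \<in> {0..<k} \<rightarrow>\<^sub>E V" unfolding \<phi>_def by auto
        ultimately show ?thesis by simp
      qed
      ultimately show "xs \<in> ?f ` ?P" by blast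
    qed
  qed
  then have "card ?P = card (permutations_of_set S)" using card_image[OF inj] by simp
  also have "\<dots> = fact k" using assms by simp
  finally show ?thesis .
qed

lemma finite_r_subsets: "finite (r_subsets {0..<n} r)"
  unfolding r_subsets_def by (simp add: finite_Collect_subsets)

lemma finite_if_subset_r_subsets: "G \<subseteq> r_subsets {0..<n} r \<Longrightarrow> finite G"
  using finite_subset finite_r_subsets by blast

lemma sum_hdeg_eq:
  assumes "G \<subseteq> r_subsets {0..<n} r"
  shows "(\<Sum>v\<in>{0..<n}. hdeg G v) = r * card G"
proof -
  have fG: "finite G" using assms by (rule finite_if_subset_r_subsets)
  have "(\<Sum>v\<in>{0..<n}. hdeg G v) = (\<Sum>v\<in>{0..<n}. \<Sum>f\<in>G. if v \<in> f then 1 else 0)"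
    unfolding hdeg_def using fG by (simp add: sum.If_cases Int_def conj_commute)
  also have "\<dots> = (\<Sum>f\<in>G. \<Sum>v\<in>{0..<n}. if v \<in> f then 1 else 0)" by (rule sum.swap)
  also have "\<dots> = (\<Sum>f\<in>G. r)"
  proof (rule sum.cong)
    fix f assume "f \<in> G"
    then have "f \<subseteq> {0..<n}" "card f = r" using assms unfolding r_subsets_def by auto
    then show "(\<Sum>v\<in>{0..<n}. if v \<in> f then 1 else 0) = r"
      by (simp add: sum.If_cases inf.absorb2)
  qed simp
  finally show ?thesis by simp
qed

lemma hdeg_Un_le: "finite A \<Longrightarrow> finite B \<Longrightarrow> hdeg (A \<union> B) v \<le> hdeg A v + hdeg B v"
  unfolding hdeg_def by (rule order.trans[OF _ card_Un_le]) (auto intro: card_mono)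

lemma card_PiE_fun_upd:
  assumes "finite I" "j \<in> I"
  shows "card (PiE I (F(j := A))) = card A * (\<Prod>l\<in>I - {j}. card (F l))"
proof -
  have "card (PiE I (F(j := A))) = card A * (\<Prod>l\<in>I - {j}. card ((F(j := A)) l))"
    using assms by (simp add: card_PiE prod.remove)
  also have "(\<Prod>l\<in>I - {j}. card ((F(j := A)) l)) = (\<Prod>l\<in>I - {j}. card (F l))"
    by (rule prod.cong) auto
  finally show ?thesis .
qed

lemma power_diff_le:
  fixes x y :: real
  assumes "0 \<le> y" "y \<le> x"
  shows "x ^ k - y ^ k \<le> real k * x ^ (k - 1) * (x - y)"
proof (induction k)
  case 0 then show ?case by simp
next
  case (Suc k)
  have "x ^ Suc k - y ^ Suc k = x * (x ^ k - y ^ k) + y ^ k * (x - y)" by (simp add: algebra_simps)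
  also have "\<dots> \<le> x * (real k * x ^ (k - 1) * (x - y)) + x ^ k * (x - y)"
    using Suc.IH assms by (intro add_mono mult_left_mono mult_right_mono power_mono) auto
  also have "\<dots> = real (Suc k) * x ^ k * (x - y)"
    by (cases k) (simp_all add: algebra_simps)
  finally show ?case by simp
qed

lemma fraction_le_of_weighted_le:
  fixes a b c \<epsilon> :: real
  assumes "0 \<le> a" "0 \<le> b" "0 \<le> c" "0 \<le> \<epsilon>" "\<epsilon> \<le> 1 / 2" and le: "a * (1 - \<epsilon>) \<le> b * c"
  shows "a / (a + b) \<le> c * (1 + 2 * \<epsilon>)"
proof (cases "a + b = 0")
  case False
  have "0 \<le> a * \<epsilon> * (1 - 2 * \<epsilon>)" using assms(1,4,5) by simp
  then have "a \<le> a * (1 - \<epsilon>) * (1 + 2 * \<epsilon>)" by (simp add: algebra_simps)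
  also have "\<dots> \<le> b * c * (1 + 2 * \<epsilon>)" using le assms(4) by (intro mult_right_mono) auto
  also have "\<dots> \<le> (a + b) * (c * (1 + 2 * \<epsilon>))" using assms by (simp add: algebra_simps)
  finally show ?thesis using False assms(1,2) by (simp add: divide_le_eq mult.commute)
qed (use assms in simp)

text \<open>
  The three summands of the constant are the relative losses in the forward count caused by the
  edges of H, by rows meeting e or each other, and by columns already in G or H'.
\<close>

definition switching_const :: "nat \<Rightarrow> real" where
  "switching_const r = real (r - 1) * real r + (real (r - 1) + real (r - 1) * real (r - 1)) * real r ^ 2
     + real r ^ (2 * (r - 1) + 1)"

definition switching_error :: "nat \<Rightarrow> nat \<Rightarrow> nat \<Rightarrow> nat \<Rightarrow> nat \<Rightarrow> real" where
  "switching_error r n d h D = 1 / real n + real d / real n ^ (r - 1) + real h / (real n * real d)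
     + real D / real n ^ (r - 1)"

lemma switching_const_pos: "r \<ge> 1 \<Longrightarrow> switching_const r > 0"
  unfolding switching_const_def by (simp add: add_nonneg_pos)

lemma switching_error_nonneg: "switching_error r n d h D \<ge> 0"
  unfolding switching_error_def by simp

lemma switching_error_tendsto_zero:
  assumes "(\<lambda>n. real (d n)) \<in> o(\<lambda>n. real n ^ (r - 1))"
    and "(\<lambda>n. real (h n)) \<in> o(\<lambda>n. real n * real (d n))"
    and "(\<lambda>n. real (D n)) \<in> o(\<lambda>n. real n ^ (r - 1))"
  shows "((\<lambda>n. switching_error r n (d n) (h n) (D n)) \<longlongrightarrow> 0) at_top"
  unfolding switching_error_def
  using lim_1_over_n smalloD_tendsto[OF assms(1)] smalloD_tendsto[OF assms(2)] smalloD_tendsto[OF assms(3)]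
  by (intro tendsto_add_zero) auto

locale switching =
  fixes r n d :: nat and H H' :: "nat set set" and e :: "nat set" and x :: "nat \<Rightarrow> nat"
  assumes r_ge_2: "r \<ge> 2" and H'_sub: "H' \<subseteq> r_subsets {0..<n} r"
    and e_in: "e \<in> r_subsets {0..<n} r" and e_notin_H: "e \<notin> H" and x_bij: "bij_betw x {0..<r} e"
begin

abbreviation "m \<equiv> r - 1"
abbreviation "V \<equiv> {0..<n}"

definition "tuples = {0..<r} \<rightarrow>\<^sub>E V"
definition "enums S = {\<phi> \<in> tuples. inj_on \<phi> {0..<r} \<and> \<phi> ` {0..<r} = S}"
definition "edge_enums G = {\<phi> \<in> tuples. inj_on \<phi> {0..<r} \<and> \<phi> ` {0..<r} \<in> G - H}"
definition "edge_enums_meeting G S = {\<phi> \<in> edge_enums G. \<phi> ` {0..<r} \<inter> S \<noteq> {}}"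

lemma finite_tuples: "finite tuples"
  unfolding tuples_def by (simp add: finite_PiE)

lemma finite_edge_enums: "finite (edge_enums G)"
  unfolding edge_enums_def using finite_tuples by simp

lemma finite_edge_enums_meeting: "finite (edge_enums_meeting G S)"
  unfolding edge_enums_meeting_def using finite_edge_enums by simp

lemma card_enums: "S \<in> r_subsets V r \<Longrightarrow> card (enums S) = fact r"
  unfolding enums_def tuples_def r_subsets_def
  by (rule card_enumerations) (auto intro: finite_subset)

lemma card_edge_enums:
  assumes "G \<subseteq> r_subsets V r"
  shows "card (edge_enums G) = fact r * card (G - H)"
proof -
  have "edge_enums G = (\<Union>S\<in>G - H. enums S)" unfolding edge_enums_def enums_def by auto
  moreover have "card (\<Union>S\<in>G - H. enums S) = (\<Sum>S\<in>G - H. card (enums S))"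
    using finite_if_subset_r_subsets[OF assms] finite_tuples
    by (intro card_UN_disjoint) (auto simp: enums_def)
  moreover have "(\<Sum>S\<in>G - H. card (enums S)) = (\<Sum>S\<in>G - H. fact r)"
    using assms card_enums by (intro sum.cong) auto
  ultimately show ?thesis by simp
qed

lemma card_edge_enums_through:
  assumes "G \<subseteq> r_subsets V r"
  shows "card {\<phi> \<in> edge_enums G. v \<in> \<phi> ` {0..<r}} \<le> fact r * hdeg G v"
proof -
  have fG: "finite G" using assms by (rule finite_if_subset_r_subsets)
  have "{\<phi> \<in> edge_enums G. v \<in> \<phi> ` {0..<r}} \<subseteq> (\<Union>S\<in>{f\<in>G. v \<in> f}. enums S)"
    unfolding edge_enums_def enums_def by auto
  then have "card {\<phi> \<in> edge_enums G. v \<in> \<phi> ` {0..<r}} \<le> card (\<Union>S\<in>{f\<in>G. v \<in> f}. enums S)"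
    using fG finite_tuples by (intro card_mono) (auto simp: enums_def)
  also have "\<dots> \<le> (\<Sum>S\<in>{f\<in>G. v \<in> f}. card (enums S))"
    using fG by (intro card_UN_le) auto
  also have "\<dots> = (\<Sum>S\<in>{f\<in>G. v \<in> f}. fact r)"
    using assms card_enums by (intro sum.cong) auto
  finally show ?thesis unfolding hdeg_def by (simp add: mult.commute)
qed

lemma card_edge_enums_meeting:
  assumes "G \<subseteq> r_subsets V r" "\<And>v. v \<in> V \<Longrightarrow> hdeg G v = d" "S \<in> r_subsets V r"
  shows "card (edge_enums_meeting G S) \<le> r * fact r * d"
proof -
  have S: "finite S" "card S = r" "S \<subseteq> V"
    using assms(3) unfolding r_subsets_def by (auto intro: finite_subset)
  have "edge_enums_meeting G S \<subseteq> (\<Union>v\<in>S. {\<phi> \<in> edge_enums G. v \<in> \<phi> ` {0..<r}})"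
    unfolding edge_enums_meeting_def by auto
  then have "card (edge_enums_meeting G S) \<le> card (\<Union>v\<in>S. {\<phi> \<in> edge_enums G. v \<in> \<phi> ` {0..<r}})"
    using S finite_edge_enums by (intro card_mono) auto
  also have "\<dots> \<le> (\<Sum>v\<in>S. card {\<phi> \<in> edge_enums G. v \<in> \<phi> ` {0..<r}})"
    using S by (intro card_UN_le) auto
  also have "\<dots> \<le> (\<Sum>v\<in>S. fact r * d)"
    using S assms(2) card_edge_enums_through[OF assms(1)] by (intro sum_mono) fastforce
  finally show ?thesis using S by (simp add: mult.assoc)
qed

definition "row_choices G = PiE {0..<m} (\<lambda>_. edge_enums G)"
definition "column i Y = insert (x i) ((\<lambda>j. Y j i) ` {0..<m})"
definition "row_edges Y = (\<lambda>j. Y j ` {0..<r}) ` {0..<m}"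
definition "column_edges Y = (\<lambda>i. column i Y) ` {0..<r}"
definition "switch G Y = (G - insert e (row_edges Y)) \<union> column_edges Y"

definition "admissible G Y \<longleftrightarrow> (\<forall>j<m. \<forall>i<r. Y j i \<notin> e) \<and>
   (\<forall>j<m. \<forall>k<m. j \<noteq> k \<longrightarrow> Y j ` {0..<r} \<inter> Y k ` {0..<r} = {}) \<and>
   (\<forall>i<r. column i Y \<notin> G \<and> column i Y \<notin> H')"

definition "forward G = {Y \<in> row_choices G. admissible G Y}"
definition "backward G = {Y \<in> PiE {0..<m} (\<lambda>_. tuples). \<forall>i<r. inj_on (\<lambda>j. Y j i) {0..<m} \<and>
   x i \<notin> (\<lambda>j. Y j i) ` {0..<m} \<and> column i Y \<in> G}"

definition "containing_e = {G \<in> cond_graphs r n d H H'. e \<in> G}"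
definition "avoiding_e = {G \<in> cond_graphs r n d H H'. e \<notin> G}"

lemma x_in_e: "i < r \<Longrightarrow> x i \<in> e"
  using x_bij by (auto simp: bij_betw_def)

lemma x_inj: "i < r \<Longrightarrow> i' < r \<Longrightarrow> x i = x i' \<Longrightarrow> i = i'"
  using x_bij by (auto simp: bij_betw_def inj_on_def)

lemma e_eq_x_image: "v \<in> e \<Longrightarrow> \<exists>i<r. v = x i"
  using x_bij by (auto simp: bij_betw_def)

lemma e_sub_V: "e \<subseteq> V" and card_e: "card e = r"
  using e_in by (auto simp: r_subsets_def)

lemma x_in_V: "i < r \<Longrightarrow> x i \<in> V"
  using x_in_e e_sub_V by blast

lemma containing_e_D:
  assumes "G \<in> containing_e"
  shows "G \<subseteq> r_subsets V r" "\<And>v. v \<in> V \<Longrightarrow> hdeg G v = d" "H \<subseteq> G" "H' \<inter> G = {}" "e \<in> G"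
  using assms by (auto simp: containing_e_def cond_graphs_def regular_graphs_def)

context
  fixes G Y assumes G: "G \<in> containing_e" and Y: "Y \<in> forward G"
begin

lemma row_enum: "j < m \<Longrightarrow> inj_on (Y j) {0..<r} \<and> Y j ` {0..<r} \<in> G - H"
  using Y by (auto simp: forward_def row_choices_def edge_enums_def)

lemma rows_PiE: "Y \<in> PiE {0..<m} (\<lambda>_. tuples)"
  using Y by (auto simp: forward_def row_choices_def edge_enums_def)

lemma entry_in_V: "j < m \<Longrightarrow> i < r \<Longrightarrow> Y j i \<in> V"
  using rows_PiE by (force simp: tuples_def PiE_iff)

lemma entry_notin_e: "j < m \<Longrightarrow> i < r \<Longrightarrow> Y j i \<notin> e"
  using Y by (simp add: forward_def admissible_def)

lemma x_neq_entry: "j < m \<Longrightarrow> i < r \<Longrightarrow> l < r \<Longrightarrow> x l \<noteq> Y j i"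
  using entry_notin_e x_in_e by metis

lemma entries_distinct:
  assumes "j < m" "k < m" "i < r" "l < r" "Y j i = Y k l"
  shows "j = k \<and> i = l"
proof -
  have "j = k"
  proof (rule ccontr)
    assume "j \<noteq> k"
    then have "Y j ` {0..<r} \<inter> Y k ` {0..<r} = {}"
      using Y assms(1,2) by (simp add: forward_def admissible_def)
    moreover have "Y j i \<in> Y j ` {0..<r} \<inter> Y k ` {0..<r}" using assms(3-5) by (metis IntI atLeastLessThan_iff image_eqI zero_le)
    ultimately show False by simp
  qed
  then show ?thesis using assms row_enum[of j] by (auto simp: inj_on_def)
qed

lemma x_notin_column_entries: "i < r \<Longrightarrow> l < r \<Longrightarrow> x l \<notin> (\<lambda>j. Y j i) ` {0..<m}"
  using x_neq_entry by auto

lemma column_notin: "i < r \<Longrightarrow> column i Y \<notin> G \<and> column i Y \<notin> H'"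
  using Y by (simp add: forward_def admissible_def)

lemma column_in_r_subsets: "i < r \<Longrightarrow> column i Y \<in> r_subsets V r"
proof -
  assume i: "i < r"
  have "inj_on (\<lambda>j. Y j i) {0..<m}" using entries_distinct i by (auto simp: inj_on_def)
  then have "card (column i Y) = Suc m"
    unfolding column_def using x_notin_column_entries i by (simp add: card_image)
  then show ?thesis
    unfolding r_subsets_def column_def using r_ge_2 entry_in_V x_in_V i by auto
qed

lemma column_neq_e: "i < r \<Longrightarrow> column i Y \<noteq> e"
proof
  assume "i < r" "column i Y = e"
  moreover have "Y 0 i \<in> column i Y" unfolding column_def using r_ge_2 by auto
  ultimately show False using entry_notin_e[of 0 i] r_ge_2 by auto
qed

lemma removed_subset: "insert e (row_edges Y) \<subseteq> G"
  using containing_e_D[OF G] row_enum unfolding row_edges_def by auto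

lemma column_edges_disjoint: "column_edges Y \<inter> G = {}"
  using column_notin unfolding column_edges_def by auto

lemma switch_inverse: "G = (switch G Y - column_edges Y) \<union> insert e (row_edges Y)"
  using removed_subset column_edges_disjoint unfolding switch_def by blast

lemma removed_through_e: "v \<in> e \<Longrightarrow> {f \<in> insert e (row_edges Y). v \<in> f} = {e}"
  unfolding row_edges_def using entry_notin_e by auto

lemma removed_through_entry:
  assumes "j < m" "i < r"
  shows "{f \<in> insert e (row_edges Y). Y j i \<in> f} = {Y j ` {0..<r}}"
proof (rule set_eqI, rule iffI)
  fix f assume f: "f \<in> {f \<in> insert e (row_edges Y). Y j i \<in> f}"
  then have "f = e \<or> (\<exists>k<m. f = Y k ` {0..<r})" unfolding row_edges_def by auto
  moreover have "f \<noteq> e" using f entry_notin_e assms by auto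
  ultimately obtain k where k: "k < m" "f = Y k ` {0..<r}" by auto
  then obtain l where "l < r" "Y j i = Y k l" using f by auto
  then have "k = j" using entries_distinct assms k by metis
  then show "f \<in> {Y j ` {0..<r}}" using k by simp
qed (use assms in \<open>auto simp: row_edges_def\<close>)

lemma removed_through_other:
  assumes "v \<notin> e" "\<forall>j<m. \<forall>i<r. v \<noteq> Y j i"
  shows "{f \<in> insert e (row_edges Y). v \<in> f} = {}"
  using assms unfolding row_edges_def by force

lemma added_through_e:
  assumes "i < r"
  shows "{f \<in> column_edges Y. x i \<in> f} = {column i Y}"
proof (rule set_eqI, rule iffI)
  fix f assume f: "f \<in> {f \<in> column_edges Y. x i \<in> f}"
  then obtain l where l: "l < r" "f = column l Y" unfolding column_edges_def by auto
  then have "x i = x l" using f x_notin_column_entries[OF l(1) assms] unfolding column_def by auto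
  then have "l = i" using x_inj assms l by metis
  then show "f \<in> {column i Y}" using l by simp
qed (use assms in \<open>auto simp: column_edges_def column_def\<close>)

lemma added_through_entry:
  assumes "j < m" "i < r"
  shows "{f \<in> column_edges Y. Y j i \<in> f} = {column i Y}"
proof (rule set_eqI, rule iffI)
  fix f assume f: "f \<in> {f \<in> column_edges Y. Y j i \<in> f}"
  then obtain l where l: "l < r" "f = column l Y" unfolding column_edges_def by auto
  have "Y j i \<noteq> x l" using x_neq_entry assms l by metis
  then obtain k where "k < m" "Y j i = Y k l" using f l unfolding column_def by auto
  then have "l = i" using entries_distinct assms l by metis
  then show "f \<in> {column i Y}" using l by simp
qed (use assms in \<open>auto simp: column_edges_def column_def\<close>)

lemma added_through_other:
  assumes "v \<notin> e" "\<forall>j<m. \<forall>i<r. v \<noteq> Y j i"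
  shows "{f \<in> column_edges Y. v \<in> f} = {}"
  using assms x_in_e unfolding column_edges_def column_def by force

lemma card_removed_through_eq_added:
  "card {f \<in> insert e (row_edges Y). v \<in> f} = card {f \<in> column_edges Y. v \<in> f}"
proof -
  consider (x) i where "i < r" "v = x i" | (entry) j i where "j < m" "i < r" "v = Y j i"
    | (other) "v \<notin> e" "\<forall>j<m. \<forall>i<r. v \<noteq> Y j i"
    using e_eq_x_image by blast
  then show ?thesis
  proof cases
    case x
    then show ?thesis using removed_through_e[of v] added_through_e x_in_e by simp
  next
    case entry
    then show ?thesis using removed_through_entry added_through_entry by simp
  next
    case other
    then show ?thesis unfolding removed_through_other[OF other] added_through_other[OF other] by simp
  qed
qed

lemma hdeg_switch: "v \<in> V \<Longrightarrow> hdeg (switch G Y) v = d"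
proof -
  assume v: "v \<in> V"
  let ?R = "insert e (row_edges Y)"
  have fG: "finite G" using containing_e_D(1)[OF G] by (rule finite_if_subset_r_subsets)
  have "{f \<in> switch G Y. v \<in> f} = ({f \<in> G. v \<in> f} - {f \<in> ?R. v \<in> f}) \<union> {f \<in> column_edges Y. v \<in> f}"
    unfolding switch_def by auto
  moreover have "card (({f \<in> G. v \<in> f} - {f \<in> ?R. v \<in> f}) \<union> {f \<in> column_edges Y. v \<in> f})
     = card ({f \<in> G. v \<in> f} - {f \<in> ?R. v \<in> f}) + card {f \<in> column_edges Y. v \<in> f}"
    using fG column_edges_disjoint by (intro card_Un_disjoint) (auto simp: column_edges_def)
  moreover have "card ({f \<in> G. v \<in> f} - {f \<in> ?R. v \<in> f}) = card {f \<in> G. v \<in> f} - card {f \<in> ?R. v \<in> f}"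
    using removed_subset fG by (intro card_Diff_subset) (auto intro: finite_subset)
  moreover have "card {f \<in> ?R. v \<in> f} \<le> card {f \<in> G. v \<in> f}"
    using fG removed_subset by (intro card_mono) auto
  ultimately have "hdeg (switch G Y) v = hdeg G v"
    unfolding hdeg_def using card_removed_through_eq_added[of v] by simp
  then show ?thesis using containing_e_D(2)[OF G] v by simp
qed

lemma switch_avoiding_e: "switch G Y \<in> avoiding_e"
proof -
  have "switch G Y \<subseteq> r_subsets V r"
    unfolding switch_def column_edges_def using containing_e_D(1)[OF G] column_in_r_subsets by auto
  moreover have "H \<subseteq> switch G Y"
    unfolding switch_def row_edges_def using containing_e_D(3)[OF G] e_notin_H row_enum by auto
  moreover have "H' \<inter> switch G Y = {}"
    unfolding switch_def column_edges_def using containing_e_D(4)[OF G] column_notin by auto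
  moreover have "e \<notin> column_edges Y"
    unfolding column_edges_def using column_neq_e by force
  then have "e \<notin> switch G Y" unfolding switch_def by auto
  ultimately show ?thesis using hdeg_switch
    by (auto simp: avoiding_e_def cond_graphs_def regular_graphs_def)
qed

lemma backward_switch: "Y \<in> backward (switch G Y)"
proof -
  have "\<forall>i<r. inj_on (\<lambda>j. Y j i) {0..<m} \<and> x i \<notin> (\<lambda>j. Y j i) ` {0..<m} \<and> column i Y \<in> switch G Y"
    using entries_distinct x_notin_column_entries
    by (auto simp: inj_on_def switch_def column_edges_def)
  then show ?thesis using rows_PiE unfolding backward_def by blast
qed

end

definition "column_enums G i = {\<psi> \<in> {0..<m} \<rightarrow>\<^sub>E V. inj_on \<psi> {0..<m} \<and> x i \<notin> \<psi> ` {0..<m} \<and>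
   insert (x i) (\<psi> ` {0..<m}) \<in> G}"

lemma card_column_enums:
  assumes "G \<subseteq> r_subsets V r" "i < r"
  shows "card (column_enums G i) \<le> fact m * hdeg G (x i)"
proof -
  have fG: "finite G" using assms(1) by (rule finite_if_subset_r_subsets)
  let ?B = "\<lambda>g. {\<psi> \<in> {0..<m} \<rightarrow>\<^sub>E V. inj_on \<psi> {0..<m} \<and> \<psi> ` {0..<m} = g - {x i}}"
  have fB: "finite (?B g)" for g
    by (rule finite_subset[OF _ finite_PiE[of "{0..<m}" "\<lambda>_. V"]]) auto
  have "column_enums G i \<subseteq> (\<Union>g\<in>{f\<in>G. x i \<in> f}. ?B g)"
    unfolding column_enums_def by auto
  then have "card (column_enums G i) \<le> card (\<Union>g\<in>{f\<in>G. x i \<in> f}. ?B g)"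
    using fG fB by (intro card_mono) auto
  also have "\<dots> \<le> (\<Sum>g\<in>{f\<in>G. x i \<in> f}. card (?B g))"
    using fG by (intro card_UN_le) auto
  also have "\<dots> = (\<Sum>g\<in>{f\<in>G. x i \<in> f}. fact m)"
  proof (rule sum.cong)
    fix g assume g: "g \<in> {f\<in>G. x i \<in> f}"
    then have "g \<subseteq> V" "card g = r" "finite g"
      using assms(1) unfolding r_subsets_def by (auto intro: finite_subset)
    then show "card (?B g) = fact m" using g by (intro card_enumerations) auto
  qed simp
  finally show ?thesis unfolding hdeg_def by (simp add: mult.commute)
qed

lemma card_backward:
  assumes "G \<in> avoiding_e"
  shows "card (backward G) \<le> (fact m * d) ^ r"
proof -
  have G: "G \<subseteq> r_subsets V r" "\<And>v. v \<in> V \<Longrightarrow> hdeg G v = d"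
    using assms by (auto simp: avoiding_e_def cond_graphs_def regular_graphs_def)
  let ?transpose = "\<lambda>Y. \<lambda>i\<in>{0..<r}. \<lambda>j\<in>{0..<m}. Y j i"
  have inj: "inj_on ?transpose (backward G)"
  proof (rule inj_onI)
    fix Y Z assume Y: "Y \<in> backward G" and Z: "Z \<in> backward G" and eq: "?transpose Y = ?transpose Z"
    have YZ: "Y j i = Z j i" if "j < m" "i < r" for j i
      using fun_cong[OF fun_cong[OF eq, of i], of j] that by simp
    have YP: "Y \<in> PiE {0..<m} (\<lambda>_. tuples)" and ZP: "Z \<in> PiE {0..<m} (\<lambda>_. tuples)"
      using Y Z by (auto simp: backward_def)
    show "Y = Z"
    proof (rule PiE_ext[OF YP ZP])
      fix j assume "j \<in> {0..<m}"
      then show "Y j = Z j"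
        by (intro PiE_ext[of _ "{0..<r}" "\<lambda>_. V"]) (use Y Z YZ in \<open>auto simp: backward_def tuples_def\<close>)
    qed
  qed
  have sub: "?transpose ` backward G \<subseteq> PiE {0..<r} (column_enums G)"
  proof
    fix W assume "W \<in> ?transpose ` backward G"
    then obtain Y where Y: "Y \<in> backward G" and W: "W = ?transpose Y" by auto
    have "(\<lambda>j\<in>{0..<m}. Y j i) \<in> column_enums G i" if i: "i < r" for i
    proof -
      have "\<forall>j<m. Y j i \<in> V" using Y i by (auto simp: backward_def tuples_def PiE_def Pi_def)
      moreover have "inj_on (\<lambda>j\<in>{0..<m}. Y j i) {0..<m}"
        using Y i unfolding backward_def by (auto simp: inj_on_def)
      ultimately show ?thesis using Y i unfolding column_enums_def backward_def column_def by auto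
    qed
    then show "W \<in> PiE {0..<r} (column_enums G)" unfolding W by auto
  qed
  have fin: "finite (PiE {0..<r} (column_enums G))"
    by (intro finite_PiE) (auto simp: column_enums_def intro!: finite_PiE)
  have "card (backward G) = card (?transpose ` backward G)" using card_image[OF inj] by simp
  also have "\<dots> \<le> card (PiE {0..<r} (column_enums G))" by (rule card_mono[OF fin sub])
  also have "\<dots> = (\<Prod>i\<in>{0..<r}. card (column_enums G i))" by (simp add: card_PiE)
  also have "\<dots> \<le> (\<Prod>i\<in>{0..<r}. fact m * d)"
  proof (rule prod_mono)
    fix i assume "i \<in> {0..<r}"
    then show "0 \<le> card (column_enums G i) \<and> card (column_enums G i) \<le> fact m * d"
      using card_column_enums[OF G(1), of i] G(2)[OF x_in_V, of i] by simp
  qed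
  finally show ?thesis by simp
qed

lemma finite_cond_graphs: "finite (cond_graphs r n d H H')"
proof -
  have "cond_graphs r n d H H' \<subseteq> Pow (r_subsets V r)"
    unfolding cond_graphs_def regular_graphs_def by auto
  then show ?thesis using finite_r_subsets by (meson finite_Pow_iff finite_subset)
qed

lemma finite_containing_e: "finite containing_e" and finite_avoiding_e: "finite avoiding_e"
  using finite_cond_graphs by (auto simp: containing_e_def avoiding_e_def)

lemma sum_card_forward_le: "(\<Sum>G\<in>containing_e. card (forward G)) \<le> card avoiding_e * (fact m * d) ^ r"
proof -
  have finite_backward: "finite (backward G)" for G
  proof -
    have "backward G \<subseteq> PiE {0..<m} (\<lambda>_. tuples)" unfolding backward_def by auto
    then show ?thesis using finite_tuples by (meson finite_PiE finite_atLeastLessThan finite_subset)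
  qed
  have finite_forward: "finite (forward G)" for G
  proof -
    have "forward G \<subseteq> PiE {0..<m} (\<lambda>_. edge_enums G)" unfolding forward_def row_choices_def by auto
    then show ?thesis using finite_edge_enums by (meson finite_PiE finite_atLeastLessThan finite_subset)
  qed
  let ?f = "\<lambda>(G, Y). (switch G Y, Y)"
  have inj: "inj_on ?f (Sigma containing_e forward)"
  proof (rule inj_onI)
    fix p q assume p: "p \<in> Sigma containing_e forward" and q: "q \<in> Sigma containing_e forward"
      and eq: "?f p = ?f q"
    obtain G Y where pGY: "p = (G, Y)" "G \<in> containing_e" "Y \<in> forward G" using p by auto
    obtain G' Y' where qGY: "q = (G', Y')" "G' \<in> containing_e" "Y' \<in> forward G'" using q by auto
    have "Y = Y'" "switch G Y = switch G' Y'" using eq pGY qGY by auto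
    then show "p = q" using switch_inverse[OF pGY(2,3)] switch_inverse[OF qGY(2,3)] pGY qGY by simp
  qed
  have sub: "?f ` Sigma containing_e forward \<subseteq> Sigma avoiding_e backward"
    using switch_avoiding_e backward_switch by auto
  have "(\<Sum>G\<in>containing_e. card (forward G)) = card (Sigma containing_e forward)"
    using card_SigmaI[OF finite_containing_e, of forward] finite_forward by simp
  also have "\<dots> = card (?f ` Sigma containing_e forward)" using card_image[OF inj] by simp
  also have "\<dots> \<le> card (Sigma avoiding_e backward)"
    by (rule card_mono[OF _ sub]) (use finite_avoiding_e finite_backward in auto)
  also have "\<dots> = (\<Sum>G\<in>avoiding_e. card (backward G))"
    using card_SigmaI[OF finite_avoiding_e, of backward] finite_backward by simp
  also have "\<dots> \<le> (\<Sum>G\<in>avoiding_e. (fact m * d) ^ r)" by (rule sum_mono) (rule card_backward)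
  finally show ?thesis by simp
qed

abbreviation "\<Delta> \<equiv> maxdeg n H'"
abbreviation "\<kappa> \<equiv> r * fact r * d"

lemma hdeg_H'_le: "v \<in> V \<Longrightarrow> hdeg H' v \<le> \<Delta>"
  unfolding maxdeg_def by (rule Max_ge) auto

lemma fact_r_eq: "(fact r :: real) = real r * fact m"
  using r_ge_2 fact_reduce[of r] by (simp add: of_nat_diff)

lemma n_ge_r: "n \<ge> r"
  using card_mono[OF _ e_sub_V] card_e by simp

context
  fixes G assumes G: "G \<in> containing_e"
begin

lemma finite_G: "finite G"
  using containing_e_D(1)[OF G] by (rule finite_if_subset_r_subsets)

lemma d_pos: "d > 0"
proof -
  have "x 0 \<in> e" using x_in_e r_ge_2 by simp
  then have "e \<in> {f \<in> G. x 0 \<in> f}" using containing_e_D(5)[OF G] by simp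
  then have "hdeg G (x 0) > 0" unfolding hdeg_def using finite_G by (auto simp: card_gt_0_iff)
  then show ?thesis using containing_e_D(2)[OF G] x_in_V r_ge_2 by simp
qed

abbreviation "\<rho> \<equiv> card (edge_enums G)"

lemma card_edge_enums_meeting_le: "S \<in> r_subsets V r \<Longrightarrow> card (edge_enums_meeting G S) \<le> \<kappa>"
  using card_edge_enums_meeting containing_e_D(1,2)[OF G] by blast

lemma edge_enum_in_r_subsets: "\<phi> \<in> edge_enums G \<Longrightarrow> \<phi> ` {0..<r} \<in> r_subsets V r"
  unfolding edge_enums_def tuples_def r_subsets_def by (auto simp: card_image PiE_def Pi_def)

text \<open>Over-approximations of the row choices violating the three conditions of admissibility.\<close>

definition "rows_meeting_e = (\<Union>j\<in>{0..<m}. PiE {0..<m} ((\<lambda>_. edge_enums G)(j := edge_enums_meeting G e)))"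

definition "rows_meeting_row j k =
  (\<Union>\<phi>\<in>edge_enums G. PiE {0..<m} (((\<lambda>_. edge_enums G)(j := {\<phi>}))(k := edge_enums_meeting G (\<phi> ` {0..<r}))))"

definition "rows_overlapping = (\<Union>j\<in>{0..<m}. \<Union>k\<in>{0..<m} - {j}. rows_meeting_row j k)"

definition "column_present =
  (\<Union>i\<in>{0..<r}. \<Union>g\<in>{g \<in> G \<union> H'. x i \<in> g}. PiE {0..<m} (\<lambda>_. edge_enums_meeting G g))"

lemma row_choices_subset: "row_choices G \<subseteq> forward G \<union> (rows_meeting_e \<union> rows_overlapping \<union> column_present)"
proof
  fix Y assume Y: "Y \<in> row_choices G"
  have row: "Y j \<in> edge_enums G" if "j < m" for j using Y that by (auto simp: row_choices_def)
  have ext: "Y \<in> extensional {0..<m}" using Y by (auto simp: row_choices_def PiE_def)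
  show "Y \<in> forward G \<union> (rows_meeting_e \<union> rows_overlapping \<union> column_present)"
  proof (cases "admissible G Y")
    case True then show ?thesis using Y by (simp add: forward_def)
  next
    case False
    then consider (meets_e) j i where "j < m" "i < r" "Y j i \<in> e"
      | (overlap) j k where "j < m" "k < m" "j \<noteq> k" "Y j ` {0..<r} \<inter> Y k ` {0..<r} \<noteq> {}"
      | (present) i where "i < r" "column i Y \<in> G \<union> H'"
      unfolding admissible_def by blast
    then show ?thesis
    proof cases
      case meets_e
      then have "Y j i \<in> Y j ` {0..<r} \<inter> e" by simp
      then have "Y j \<in> edge_enums_meeting G e" using row[OF meets_e(1)] unfolding edge_enums_meeting_def by blast
      then have "Y \<in> PiE {0..<m} ((\<lambda>_. edge_enums G)(j := edge_enums_meeting G e))"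
        using row ext by (auto simp: PiE_iff)
      then have "Y \<in> rows_meeting_e" unfolding rows_meeting_e_def using meets_e(1) by (intro UN_I[of j]) auto
      then show ?thesis by simp
    next
      case overlap
      then have "Y k \<in> edge_enums_meeting G (Y j ` {0..<r})"
        using row[OF overlap(2)] unfolding edge_enums_meeting_def by (simp add: Int_commute)
      then have "Y \<in> PiE {0..<m} (((\<lambda>_. edge_enums G)(j := {Y j}))(k := edge_enums_meeting G (Y j ` {0..<r})))"
        using row ext by (auto simp: PiE_iff)
      then have "Y \<in> rows_meeting_row j k"
        unfolding rows_meeting_row_def using row[OF overlap(1)] by (intro UN_I[of "Y j"])
      then have "Y \<in> rows_overlapping"
        unfolding rows_overlapping_def using overlap(1-3) by (intro UN_I[of j] UN_I[of k]) auto
      then show ?thesis by simp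
    next
      case present
      have "Y j \<in> edge_enums_meeting G (column i Y)" if j: "j < m" for j
      proof -
        have "Y j i \<in> Y j ` {0..<r} \<inter> column i Y"
          using present(1) j unfolding column_def by simp
        then show ?thesis using row[OF j] unfolding edge_enums_meeting_def by blast
      qed
      then have "Y \<in> PiE {0..<m} (\<lambda>_. edge_enums_meeting G (column i Y))" using ext by (auto simp: PiE_iff)
      moreover have "column i Y \<in> {g \<in> G \<union> H'. x i \<in> g}" using present(2) by (simp add: column_def)
      ultimately have "Y \<in> column_present"
        unfolding column_present_def using present(1) by (intro UN_I[of i] UN_I[of "column i Y"]) auto
      then show ?thesis by simp
    qed
  qed
qed

lemma card_row_choices: "card (row_choices G) = \<rho> ^ m"
  unfolding row_choices_def by (simp add: card_PiE)

lemma card_rows_meeting_e: "card rows_meeting_e \<le> m * (\<kappa> * \<rho> ^ (m - 1))"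
proof -
  have "card rows_meeting_e \<le> (\<Sum>j\<in>{0..<m}. card (PiE {0..<m} ((\<lambda>_. edge_enums G)(j := edge_enums_meeting G e))))"
    unfolding rows_meeting_e_def by (rule card_UN_le) simp
  also have "\<dots> \<le> (\<Sum>j\<in>{0..<m}. \<kappa> * \<rho> ^ (m - 1))"
  proof (rule sum_mono)
    fix j assume j: "j \<in> {0..<m}"
    then have "card (PiE {0..<m} ((\<lambda>_. edge_enums G)(j := edge_enums_meeting G e)))
        = card (edge_enums_meeting G e) * \<rho> ^ (m - 1)"
      by (simp add: card_PiE_fun_upd)
    also have "\<dots> \<le> \<kappa> * \<rho> ^ (m - 1)" using card_edge_enums_meeting_le[OF e_in] by simp
    finally show "card (PiE {0..<m} ((\<lambda>_. edge_enums G)(j := edge_enums_meeting G e))) \<le> \<kappa> * \<rho> ^ (m - 1)" .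
  qed
  finally show ?thesis by simp
qed

lemma card_rows_meeting_row:
  assumes "j < m" "k < m" "j \<noteq> k"
  shows "card (rows_meeting_row j k) \<le> \<kappa> * \<rho> ^ (m - 1)"
proof -
  let ?F = "\<lambda>\<phi>. ((\<lambda>_. edge_enums G)(j := {\<phi>}))(k := edge_enums_meeting G (\<phi> ` {0..<r}))"
  have "card (rows_meeting_row j k) \<le> (\<Sum>\<phi>\<in>edge_enums G. card (PiE {0..<m} (?F \<phi>)))"
    unfolding rows_meeting_row_def by (rule card_UN_le) (rule finite_edge_enums)
  also have "\<dots> \<le> (\<Sum>\<phi>\<in>edge_enums G. \<kappa> * \<rho> ^ (m - 2))"
  proof (rule sum_mono)
    fix \<phi> assume \<phi>: "\<phi> \<in> edge_enums G"
    have "(\<Prod>l\<in>{0..<m} - {k}. card (((\<lambda>_. edge_enums G)(j := {\<phi>})) l))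
        = (\<Prod>l\<in>{0..<m} - {k} - {j}. card (((\<lambda>_. edge_enums G)(j := {\<phi>})) l))"
      using assms by (subst prod.remove[of _ j]) auto
    also have "\<dots> = (\<Prod>l\<in>{0..<m} - {k} - {j}. \<rho>)" by (rule prod.cong) auto
    also have "\<dots> = \<rho> ^ (m - 2)" using assms by (simp add: card_Diff_singleton)
    finally have "card (PiE {0..<m} (?F \<phi>)) = card (edge_enums_meeting G (\<phi> ` {0..<r})) * \<rho> ^ (m - 2)"
      using assms by (simp add: card_PiE_fun_upd)
    also have "\<dots> \<le> \<kappa> * \<rho> ^ (m - 2)"
      using card_edge_enums_meeting_le[OF edge_enum_in_r_subsets[OF \<phi>]] by simp
    finally show "card (PiE {0..<m} (?F \<phi>)) \<le> \<kappa> * \<rho> ^ (m - 2)" .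
  qed
  also have "\<dots> = \<kappa> * \<rho> ^ (m - 1)"
  proof -
    have "m - 1 = Suc (m - 2)" using assms by linarith
    then show ?thesis by (simp add: mult.left_commute)
  qed
  finally show ?thesis .
qed

lemma card_rows_overlapping: "card rows_overlapping \<le> m * m * (\<kappa> * \<rho> ^ (m - 1))"
proof -
  have "card rows_overlapping \<le> (\<Sum>j\<in>{0..<m}. card (\<Union>k\<in>{0..<m} - {j}. rows_meeting_row j k))"
    unfolding rows_overlapping_def by (rule card_UN_le) simp
  also have "\<dots> \<le> (\<Sum>j\<in>{0..<m}. \<Sum>k\<in>{0..<m} - {j}. card (rows_meeting_row j k))"
    by (intro sum_mono card_UN_le) simp
  also have "\<dots> \<le> (\<Sum>j\<in>{0..<m}. \<Sum>k\<in>{0..<m}. \<kappa> * \<rho> ^ (m - 1))"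
  proof (intro sum_mono)
    fix j assume "j \<in> {0..<m}"
    then have "(\<Sum>k\<in>{0..<m} - {j}. card (rows_meeting_row j k)) \<le> (\<Sum>k\<in>{0..<m} - {j}. \<kappa> * \<rho> ^ (m - 1))"
      using card_rows_meeting_row by (intro sum_mono) auto
    also have "\<dots> \<le> (\<Sum>k\<in>{0..<m}. \<kappa> * \<rho> ^ (m - 1))" by (intro sum_mono2) auto
    finally show "(\<Sum>k\<in>{0..<m} - {j}. card (rows_meeting_row j k)) \<le> (\<Sum>k\<in>{0..<m}. \<kappa> * \<rho> ^ (m - 1))" .
  qed
  finally show ?thesis by simp
qed

lemma card_column_present: "card column_present \<le> r * ((d + \<Delta>) * \<kappa> ^ m)"
proof -
  have "card column_present
      \<le> (\<Sum>i\<in>{0..<r}. card (\<Union>g\<in>{g \<in> G \<union> H'. x i \<in> g}. PiE {0..<m} (\<lambda>_. edge_enums_meeting G g)))"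
    unfolding column_present_def by (rule card_UN_le) simp
  also have "\<dots> \<le> (\<Sum>i\<in>{0..<r}. (d + \<Delta>) * \<kappa> ^ m)"
  proof (rule sum_mono)
    fix i assume "i \<in> {0..<r}"
    then have xV: "x i \<in> V" using x_in_V by simp
    have fin: "finite {g \<in> G \<union> H'. x i \<in> g}"
      using finite_G finite_if_subset_r_subsets[OF H'_sub] by simp
    have "card (\<Union>g\<in>{g \<in> G \<union> H'. x i \<in> g}. PiE {0..<m} (\<lambda>_. edge_enums_meeting G g))
        \<le> (\<Sum>g\<in>{g \<in> G \<union> H'. x i \<in> g}. card (PiE {0..<m} (\<lambda>_. edge_enums_meeting G g)))"
      by (rule card_UN_le[OF fin])
    also have "\<dots> \<le> (\<Sum>g\<in>{g \<in> G \<union> H'. x i \<in> g}. \<kappa> ^ m)"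
    proof (rule sum_mono)
      fix g assume "g \<in> {g \<in> G \<union> H'. x i \<in> g}"
      then have "g \<in> r_subsets V r" using containing_e_D(1)[OF G] H'_sub by auto
      then show "card (PiE {0..<m} (\<lambda>_. edge_enums_meeting G g)) \<le> \<kappa> ^ m"
        using card_edge_enums_meeting_le by (simp add: card_PiE power_mono)
    qed
    also have "\<dots> = hdeg (G \<union> H') (x i) * \<kappa> ^ m" by (simp add: hdeg_def)
    also have "\<dots> \<le> (d + \<Delta>) * \<kappa> ^ m"
      using hdeg_Un_le[OF finite_G finite_if_subset_r_subsets[OF H'_sub], of "x i"]
        containing_e_D(2)[OF G xV] hdeg_H'_le[OF xV] by (intro mult_right_mono) auto
    finally show "card (\<Union>g\<in>{g \<in> G \<union> H'. x i \<in> g}. PiE {0..<m} (\<lambda>_. edge_enums_meeting G g))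
        \<le> (d + \<Delta>) * \<kappa> ^ m" .
  qed
  finally show ?thesis by simp
qed

lemma card_forward_ge:
  "real (card (forward G)) \<ge> real \<rho> ^ m - real m * (real \<kappa> * real \<rho> ^ (m - 1))
     - real m * real m * (real \<kappa> * real \<rho> ^ (m - 1)) - real r * ((real d + real \<Delta>) * real \<kappa> ^ m)"
proof -
  have finite_forward: "finite (forward G)"
    unfolding forward_def row_choices_def using finite_edge_enums by (simp add: finite_PiE)
  have "finite rows_meeting_e" "finite rows_overlapping" "finite column_present"
    unfolding rows_meeting_e_def rows_overlapping_def rows_meeting_row_def column_present_def
    using finite_edge_enums finite_edge_enums_meeting finite_G finite_if_subset_r_subsets[OF H'_sub]
    by (auto intro!: finite_PiE)
  then have "\<rho> ^ m \<le> card (forward G \<union> (rows_meeting_e \<union> rows_overlapping \<union> column_present))"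
    unfolding card_row_choices[symmetric] using finite_forward
    by (intro card_mono[OF _ row_choices_subset]) auto
  also have "\<dots> \<le> card (forward G) + (card rows_meeting_e + card rows_overlapping + card column_present)"
    using card_Un_le[of "forward G"] card_Un_le[of "rows_meeting_e \<union> rows_overlapping"]
      card_Un_le[of rows_meeting_e] by (meson add_mono le_refl order_trans)
  finally have "\<rho> ^ m \<le> card (forward G) + (m * (\<kappa> * \<rho> ^ (m - 1)) + m * m * (\<kappa> * \<rho> ^ (m - 1))
      + r * ((d + \<Delta>) * \<kappa> ^ m))"
    using card_rows_meeting_e card_rows_overlapping card_column_present by linarith
  then have "real (\<rho> ^ m) \<le> real (card (forward G) + (m * (\<kappa> * \<rho> ^ (m - 1))
      + m * m * (\<kappa> * \<rho> ^ (m - 1)) + r * ((d + \<Delta>) * \<kappa> ^ m)))"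
    by (simp only: of_nat_le_iff)
  then show ?thesis unfolding of_nat_mult of_nat_power of_nat_add by linarith
qed

lemma card_edge_enums_eq: "real \<rho> = fact m * real n * real d - real r * fact m * real (card H)"
proof -
  have "r * card G = n * d"
    using sum_hdeg_eq[OF containing_e_D(1)[OF G]] containing_e_D(2)[OF G] by simp
  then have "real r * real (card G) = real n * real d" by (metis of_nat_mult)
  moreover have "card (G - H) = card G - card H" "card H \<le> card G"
    using containing_e_D(3)[OF G] finite_G by (auto intro: card_Diff_subset card_mono finite_subset)
  ultimately show ?thesis
    using card_edge_enums[OF containing_e_D(1)[OF G]] fact_r_eq by (simp add: of_nat_diff algebra_simps)
qed

lemma card_forward_ge_scaled:
  "(fact m * real n * real d) ^ m * (1 - switching_const r * switching_error r n d (card H) \<Delta>)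
     \<le> real (card (forward G))"
proof -
  define a where "a = fact m * real n * real d"
  define h where "h = real (card H)"
  have n: "real n > 0" using n_ge_r r_ge_2 by simp
  have d: "real d > 0" using d_pos by simp
  have a: "a > 0" unfolding a_def using n d by simp
  have am: "a ^ m = a * a ^ (m - 1)" using r_ge_2 by (simp add: power_eq_if)
  have \<kappa>: "real \<kappa> = a * real r ^ 2 / real n"
    using fact_r_eq n unfolding a_def by (simp add: power2_eq_square)
  have \<rho>: "real \<rho> = a - real r * fact m * h" using card_edge_enums_eq unfolding a_def h_def .
  have \<rho>_le: "real \<rho> \<le> a" unfolding \<rho> h_def by simp
  have "real \<rho> ^ m \<ge> a ^ m - real m * a ^ (m - 1) * (a - real \<rho>)"
    using power_diff_le[OF of_nat_0_le_iff \<rho>_le, of m] by simp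
  also have "real m * a ^ (m - 1) * (a - real \<rho>) = a ^ m * (real m * real r * h / (real n * real d))"
    unfolding \<rho> am using a n d unfolding a_def by (simp add: field_simps)
  finally have A: "real \<rho> ^ m \<ge> a ^ m - a ^ m * (real m * real r * h / (real n * real d))" .
  have "real m * (real \<kappa> * real \<rho> ^ (m - 1)) + real m * real m * (real \<kappa> * real \<rho> ^ (m - 1))
      = (real m + real m * real m) * real \<kappa> * real \<rho> ^ (m - 1)"
    by (simp add: algebra_simps)
  also have "\<dots> \<le> (real m + real m * real m) * real \<kappa> * a ^ (m - 1)"
    using \<rho>_le by (intro mult_left_mono power_mono) auto
  also have "\<dots> = a ^ m * ((real m + real m * real m) * real r ^ 2 / real n)"
    unfolding \<kappa> am by simp
  finally have B: "real m * (real \<kappa> * real \<rho> ^ (m - 1)) + real m * real m * (real \<kappa> * real \<rho> ^ (m - 1))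
      \<le> a ^ m * ((real m + real m * real m) * real r ^ 2 / real n)" .
  have C: "real r * ((real d + real \<Delta>) * real \<kappa> ^ m)
      = a ^ m * (real r ^ (2 * m + 1) * (real d / real n ^ m + real \<Delta> / real n ^ m))"
    unfolding \<kappa> using n by (simp add: power_divide power_mult_distrib power_mult field_simps)
  have D: "real m * real r * h / (real n * real d) + (real m + real m * real m) * real r ^ 2 / real n
      + real r ^ (2 * m + 1) * (real d / real n ^ m + real \<Delta> / real n ^ m)
      \<le> switching_const r * switching_error r n d (card H) \<Delta>"
  proof -
    let ?K = "switching_const r"
    have "real m * real r * h / (real n * real d) + (real m + real m * real m) * real r ^ 2 / real n
        + real r ^ (2 * m + 1) * (real d / real n ^ m + real \<Delta> / real n ^ m)
      = real m * real r * (h / (real n * real d)) + (real m + real m * real m) * real r ^ 2 * (1 / real n)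
        + real r ^ (2 * m + 1) * (real d / real n ^ m + real \<Delta> / real n ^ m)"
      by simp
    also have "\<dots> \<le> ?K * (h / (real n * real d)) + ?K * (1 / real n)
        + ?K * (real d / real n ^ m + real \<Delta> / real n ^ m)"
      unfolding switching_const_def h_def by (intro add_mono mult_right_mono) simp_all
    also have "\<dots> = ?K * switching_error r n d (card H) \<Delta>"
      unfolding switching_error_def h_def by (simp add: algebra_simps)
    finally show ?thesis .
  qed
  have "a ^ m * (1 - switching_const r * switching_error r n d (card H) \<Delta>)
      \<le> a ^ m - a ^ m * (real m * real r * h / (real n * real d))
        - a ^ m * ((real m + real m * real m) * real r ^ 2 / real n)
        - a ^ m * (real r ^ (2 * m + 1) * (real d / real n ^ m + real \<Delta> / real n ^ m))"
    using mult_left_mono[OF D, of "a ^ m"] a by (simp add: algebra_simps)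
  also have "\<dots> \<le> real (card (forward G))" using card_forward_ge A B C by linarith
  finally show ?thesis unfolding a_def .
qed

end

lemma cond_prob_le:
  assumes small: "switching_const r * switching_error r n d (card H) \<Delta> \<le> 1 / 2"
  shows "cond_prob r n d H H' e
    \<le> fact (r - 1) * (real d / real n ^ (r - 1)) * (1 + 2 * switching_const r * switching_error r n d (card H) \<Delta>)"
proof (cases "containing_e = {}")
  case True
  then show ?thesis
    using switching_const_pos[of r] switching_error_nonneg[of r n d "card H" \<Delta>] r_ge_2
    by (simp add: cond_prob_def containing_e_def[symmetric])
next
  case False
  define \<epsilon> where "\<epsilon> = switching_const r * switching_error r n d (card H) \<Delta>"
  define a where "a = fact m * real n * real d"
  define c where "c = fact m * (real d / real n ^ m)"
  have n: "real n > 0" using n_ge_r r_ge_2 by simp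
  have a: "a > 0" unfolding a_def using n d_pos False by auto
  have \<epsilon>: "0 \<le> \<epsilon>" unfolding \<epsilon>_def
    using switching_const_pos[of r] switching_error_nonneg r_ge_2 by simp
  have "real (card containing_e) * (a ^ m * (1 - \<epsilon>)) = (\<Sum>G\<in>containing_e. a ^ m * (1 - \<epsilon>))"
    by simp
  also have "\<dots> \<le> (\<Sum>G\<in>containing_e. real (card (forward G)))"
    by (rule sum_mono) (use card_forward_ge_scaled in \<open>simp add: a_def \<epsilon>_def\<close>)
  also have "\<dots> \<le> real (card avoiding_e * (fact m * d) ^ r)"
    using sum_card_forward_le unfolding of_nat_sum[symmetric] of_nat_le_iff .
  also have "\<dots> = real (card avoiding_e) * (fact m * real d) ^ r" by simp
  also have "(fact m * real d) ^ r = a ^ m * c"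
  proof -
    have "(fact m * real d) ^ r = (fact m * real d) ^ m * (fact m * real d)"
      using r_ge_2 by (metis Suc_diff_1 less_le_trans pos2 power_Suc2)
    moreover have "a ^ m = (fact m * real d) ^ m * real n ^ m"
      unfolding a_def by (simp add: power_mult_distrib algebra_simps)
    ultimately show ?thesis unfolding c_def using n by simp
  qed
  finally have "real (card containing_e) * (1 - \<epsilon>) * a ^ m \<le> real (card avoiding_e) * c * a ^ m"
    by (simp add: algebra_simps)
  then have "real (card containing_e) * (1 - \<epsilon>) \<le> real (card avoiding_e) * c"
    using a by simp
  then have "real (card containing_e) / (real (card containing_e) + real (card avoiding_e)) \<le> c * (1 + 2 * \<epsilon>)"
    using \<epsilon> small unfolding \<epsilon>_def c_def by (intro fraction_le_of_weighted_le) auto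
  moreover have "card (cond_graphs r n d H H') = card containing_e + card avoiding_e"
  proof -
    have "cond_graphs r n d H H' = containing_e \<union> avoiding_e" "containing_e \<inter> avoiding_e = {}"
      unfolding containing_e_def avoiding_e_def by auto
    then show ?thesis using finite_containing_e finite_avoiding_e by (simp add: card_Un_disjoint)
  qed
  ultimately show ?thesis unfolding cond_prob_def c_def \<epsilon>_def containing_e_def by (simp add: algebra_simps)
qed

end

lemma eventually_cond_prob_le:
  assumes r: "r \<ge> 2"
    and d: "(\<lambda>n. real (d n)) \<in> o(\<lambda>n. real n ^ (r - 1))"
    and H: "(\<lambda>n. real (card (H n))) \<in> o(\<lambda>n. real n * real (d n))"
    and H': "\<And>n. H' n \<subseteq> r_subsets {0..<n} r" "(\<lambda>n. real (maxdeg n (H' n))) \<in> o(\<lambda>n. real n ^ (r - 1))"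
  shows "\<forall>\<^sub>F n in at_top. \<forall>e \<in> r_subsets {0..<n} r - (H n \<union> H' n).
    cond_prob r n (d n) (H n) (H' n) e \<le> fact (r - 1) * (real (d n) / real n ^ (r - 1)) *
      (1 + 2 * switching_const r * switching_error r n (d n) (card (H n)) (maxdeg n (H' n)))"
proof -
  let ?K = "switching_const r"
  let ?err = "\<lambda>n. switching_error r n (d n) (card (H n)) (maxdeg n (H' n))"
  have "(?err \<longlongrightarrow> 0) at_top" using d H H'(2) by (rule switching_error_tendsto_zero)
  then have "\<forall>\<^sub>F n in at_top. ?K * ?err n \<le> 1 / 2"
    using switching_const_pos[of r] r
    by (auto dest: order_tendstoD(2)[of _ 0 _ "1 / (2 * ?K)"] elim!: eventually_mono simp: field_simps)
  then show ?thesis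
  proof (elim eventually_mono, intro ballI)
    fix n e assume small: "?K * ?err n \<le> 1 / 2" and e: "e \<in> r_subsets {0..<n} r - (H n \<union> H' n)"
    then obtain x where "bij_betw x {0..<r} e"
      using ex_bij_betw_nat_finite[of e] by (auto simp: r_subsets_def intro: finite_subset)
    then interpret switching r n "d n" "H n" "H' n" e x
      using r H'(1) e by unfold_locales auto
    show "cond_prob r n (d n) (H n) (H' n) e
        \<le> fact (r - 1) * (real (d n) / real n ^ (r - 1)) * (1 + 2 * ?K * ?err n)"
      using cond_prob_le[OF small] .
  qed
qed

theorem lemma2p1:
  fixes r :: nat
  assumes "r \<ge> 2"
  shows "\<exists>C>0. \<forall>(d :: nat \<Rightarrow> nat) (H :: nat \<Rightarrow> nat set set) (H' :: nat \<Rightarrow> nat set set).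
    (\<forall>\<^sub>F n in at_top. r dvd n * d n) \<and>
    (\<lambda>n. real (d n)) \<in> o(\<lambda>n. real n ^ (r - 1)) \<and>
    (\<forall>n. H n \<subseteq> r_subsets {0..<n} r \<and> H' n \<subseteq> r_subsets {0..<n} r \<and> H n \<inter> H' n = {}) \<and>
    (\<lambda>n. real (card (H n))) \<in> o(\<lambda>n. real n * real (d n)) \<and>
    (\<lambda>n. real (maxdeg n (H' n))) \<in> o(\<lambda>n. real n ^ (r - 1))
    \<longrightarrow> (\<forall>\<^sub>F n in at_top. \<forall>e \<in> r_subsets {0..<n} r - (H n \<union> H' n).
          cond_prob r n (d n) (H n) (H' n) e
          \<le> fact (r - 1) * (real (d n) / real n ^ (r - 1)) *
             (1 + C * (1 / real n + real (d n) / real n ^ (r - 1)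
                       + real (card (H n)) / (real n * real (d n))
                       + real (maxdeg n (H' n)) / real n ^ (r - 1))))"
proof (intro exI[of _ "2 * switching_const r"] conjI allI impI)
  show "2 * switching_const r > 0" using switching_const_pos[of r] assms by simp
next
  fix d :: "nat \<Rightarrow> nat" and H H' :: "nat \<Rightarrow> nat set set"
  assume "(\<forall>\<^sub>F n in at_top. r dvd n * d n) \<and>
    (\<lambda>n. real (d n)) \<in> o(\<lambda>n. real n ^ (r - 1)) \<and>
    (\<forall>n. H n \<subseteq> r_subsets {0..<n} r \<and> H' n \<subseteq> r_subsets {0..<n} r \<and> H n \<inter> H' n = {}) \<and>
    (\<lambda>n. real (card (H n))) \<in> o(\<lambda>n. real n * real (d n)) \<and>
    (\<lambda>n. real (maxdeg n (H' n))) \<in> o(\<lambda>n. real n ^ (r - 1))"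
  then show "\<forall>\<^sub>F n in at_top. \<forall>e \<in> r_subsets {0..<n} r - (H n \<union> H' n).
      cond_prob r n (d n) (H n) (H' n) e \<le> fact (r - 1) * (real (d n) / real n ^ (r - 1)) *
        (1 + 2 * switching_const r * (1 / real n + real (d n) / real n ^ (r - 1)
          + real (card (H n)) / (real n * real (d n)) + real (maxdeg n (H' n)) / real n ^ (r - 1)))"
    using eventually_cond_prob_le[OF assms, of d H H'] unfolding switching_error_def by blast
qed

end
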